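(* Let $\mathcal H$ and $\mathcal H'$ be the rank-one-root affine Hecke algebras described in the context. Let $I:\mathcal H\to\mathcal H'$ be an algebra homomorphism such that $I(T_s)=c'\theta_{k(\alpha')^\vee}T_{s'}+b'$ for some $c'\in\mathbb C^\times$, $k\in\mathbb Z$, $b'\in\mathbb C[Y']$, and $I(\theta_{\alpha^\vee})=c\,\theta_{n(\alpha')^\vee}$ for some $c\in\mathbb C^\times$ and positive integer $n$. Then: if $k$ is even, $I(T_s)=\theta_{k(\alpha')^\vee/2}T_{s'}\theta_{-k(\alpha')^\vee/2}$, $I(\theta_{\alpha^\vee})=\theta_{(\alpha')^\vee}$, $q_1=q_1'$, $q_0=q_0'$; and if $k$ is odd, $I(T_s)=\theta_{(k-1)(\alpha')^\vee/2}T_{s',0}\theta_{-(k-1)(\alpha')^\vee/2}$, $I(\theta_{\alpha^\vee})=\theta_{(\alpha')^\vee}$, $q_1=q_0'$, $q_0=q_1'$, where $T_{s',0}=(q_1')^{-1/2}(q_0')^{1/2}\big(\theta_{(\alpha')^\vee}T_{s'}-(q_1'-1)\theta_{(\alpha')^\vee}\big)$.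
   Context: Let $\mathcal R=(X,R=\{\pm\alpha\},Y,R^\vee=\{\pm\alpha^\vee\},\Delta=\{\alpha\})$ and $\mathcal R'=(X',\{\pm\alpha'\},Y',\{\pm(\alpha')^\vee\},\{\alpha'\})$ be based root data (free $\mathbb Z$-modules $X,Y$ of finite rank, not necessarily of rank one, in perfect pairing, $\langle\alpha,\alpha^\vee\rangle=2$). Let $\lambda(\alpha),\lambda^*(\alpha),\lambda'(\alpha'),(\lambda^* )'(\alpha')$ be positive reals, with $\lambda(\alpha)=\lambda^*(\alpha)$ unless $\alpha\in2X$ and $\lambda'(\alpha')=(\lambda^* )'(\alpha')$ unless $\alpha'\in2X'$. Fix $\mathbf q>1$ and put $q_1=\mathbf q^{\lambda(\alpha)}$, $q_0=\mathbf q^{\lambda^*(\alpha)}$, $q_1'=\mathbf q^{\lambda'(\alpha')}$, $q_0'=\mathbf q^{(\lambda^* )'(\alpha')}$. $s=s_\alpha$, $s'=s_{\alpha'}$, with $s(y)=y-\langle\alpha,y\rangle\alpha^\vee$. $\mathcal H$ is the affine Hecke algebra: the vector space $\mathbb C[Y]\otimes\mathcal H(W_0,q)$, where $\mathbb C[Y]$ has basis $\theta_y$ ($y\in Y$), $\mathcal H(W_0,q)$ has basis $1,T_s$ with $(T_s+1)(T_s-q_1)=0$, both embedded as subalgebras, and $\theta_yT_s-T_s\theta_{s(y)}=\big((q_1-1)+\theta_{-\alpha^\vee}(q_1^{1/2}q_0^{1/2}-q_1^{1/2}q_0^{-1/2})\big)\frac{\theta_y-\theta_{s(y)}}{\theta_0-\theta_{-2\alpha^\vee}}$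 for all $y\in Y$. $\mathcal H'$ is defined in the same way from $\mathcal R',q_1',q_0'$ with generator $T_{s'}$. *)

theory Defs
  imports "HOL-Analysis.Finite_Cartesian_Product" "HOL-Library.Poly_Mapping"
begin

(* Lattices: Y = int^'n (after choosing a basis), X = int^'n via the dual basis,
   so the perfect pairing is the standard dot product. *)

type_synonym 'n lat = "int ^ 'n"
type_synonym 'n grpalg = "'n lat \<Rightarrow>\<^sub>0 complex"
(* element f + g T_s of H, with f, g in C[Y] (basis theta_y T_w) *)
type_synonym 'n hecke = "'n grpalg \<times> 'n grpalg"

definition pairing :: "'n::finite lat \<Rightarrow> 'n lat \<Rightarrow> int" where
  "pairing x y = (\<Sum>i\<in>UNIV. x $ i * y $ i)"

definition theta :: "'n::finite lat \<Rightarrow> 'n grpalg" where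
  "theta y = Poly_Mapping.single y 1"

definition cst :: "complex \<Rightarrow> 'n::finite grpalg" where
  "cst c = Poly_Mapping.single 0 c"

(* based root datum of rank-one root system {+-al}, coroots {+-alv} *)
definition root_datum :: "'n::finite lat \<Rightarrow> 'n lat \<Rightarrow> bool" where
  "root_datum al alv \<longleftrightarrow> pairing al alv = 2"

definition in2X :: "'n::finite lat \<Rightarrow> bool" where
  "in2X al \<longleftrightarrow> (\<exists>x. al = 2 *s x)"

definition sref :: "'n::finite lat \<Rightarrow> 'n lat \<Rightarrow> 'n lat \<Rightarrow> 'n lat" where
  "sref al alv y = y - pairing al y *s alv"

definition sact :: "'n::finite lat \<Rightarrow> 'n lat \<Rightarrow> 'n grpalg \<Rightarrow> 'n grpalg" where
  "sact al alv f = (\<Sum>y\<in>Poly_Mapping.keys f. Poly_Mapping.single (sref al alv y) (Poly_Mapping.lookup f y))"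

definition Gfac :: "'n::finite lat \<Rightarrow> real \<Rightarrow> real \<Rightarrow> 'n grpalg" where
  "Gfac alv q1 q0 = cst (complex_of_real (q1 - 1))
     + theta (- alv) * cst (complex_of_real (sqrt q1 * sqrt q0 - sqrt q1 / sqrt q0))"

(* the right-hand side of the Bernstein relation:
   G * (theta_y - theta_{s(y)}) / (theta_0 - theta_{-2 alv}), the quotient taken in C[Y] *)
definition bern :: "'n::finite lat \<Rightarrow> 'n lat \<Rightarrow> real \<Rightarrow> real \<Rightarrow> 'n lat \<Rightarrow> 'n grpalg" where
  "bern al alv q1 q0 y = (THE h. h * (theta 0 - theta (- (2 *s alv)))
        = Gfac alv q1 q0 * (theta y - theta (sref al alv y)))"

(* linear extension: Q(f) = sum_y f(y) bern(y); then T_s f = s(f) T_s + Q(f) *)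
definition Qop :: "'n::finite lat \<Rightarrow> 'n lat \<Rightarrow> real \<Rightarrow> real \<Rightarrow> 'n grpalg \<Rightarrow> 'n grpalg" where
  "Qop al alv q1 q0 f = (\<Sum>y\<in>Poly_Mapping.keys f. cst (Poly_Mapping.lookup f y) * bern al alv q1 q0 y)"

(* Multiplication of H, derived from: C[Y] subalgebra; (T_s+1)(T_s-q1)=0, i.e.
   T_s^2 = (q1-1) T_s + q1; and theta_y T_s - T_s theta_{s y} = bern y,
   equivalently T_s f = s(f) T_s + Q(f).
   (f1 + g1 T)(f2 + g2 T) = f1 f2 + g1 Q(f2) + q1 g1 s(g2)
                          + (f1 g2 + g1 s(f2) + g1 Q(g2) + (q1-1) g1 s(g2)) T *)
definition hmult :: "'n::finite lat \<Rightarrow> 'n lat \<Rightarrow> real \<Rightarrow> real \<Rightarrow> 'n hecke \<Rightarrow> 'n hecke \<Rightarrow> 'n hecke" where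
  "hmult al alv q1 q0 a b =
     (let f1 = fst a; g1 = snd a; f2 = fst b; g2 = snd b in
      (f1 * f2 + g1 * Qop al alv q1 q0 f2 + cst (complex_of_real q1) * g1 * sact al alv g2,
       f1 * g2 + g1 * sact al alv f2 + g1 * Qop al alv q1 q0 g2
         + cst (complex_of_real (q1 - 1)) * g1 * sact al alv g2))"

definition hadd :: "'n::finite hecke \<Rightarrow> 'n hecke \<Rightarrow> 'n hecke" where
  "hadd a b = (fst a + fst b, snd a + snd b)"

definition hscale :: "complex \<Rightarrow> 'n::finite hecke \<Rightarrow> 'n hecke" where
  "hscale c a = (cst c * fst a, cst c * snd a)"

definition emb :: "'n::finite grpalg \<Rightarrow> 'n hecke" where
  "emb f = (f, 0)"

definition Tgen :: "'n::finite hecke" where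
  "Tgen = (0, 1)"

definition hone :: "'n::finite hecke" where
  "hone = (1, 0)"

definition hecke_alg_hom ::
  "'n::finite lat \<Rightarrow> 'n lat \<Rightarrow> real \<Rightarrow> real \<Rightarrow>
   'm::finite lat \<Rightarrow> 'm lat \<Rightarrow> real \<Rightarrow> real \<Rightarrow> ('n hecke \<Rightarrow> 'm hecke) \<Rightarrow> bool" where
  "hecke_alg_hom al alv q1 q0 al' alv' q1' q0' I \<longleftrightarrow>
     (\<forall>a b. I (hadd a b) = hadd (I a) (I b)) \<and>
     (\<forall>c a. I (hscale c a) = hscale c (I a)) \<and>
     (\<forall>a b. I (hmult al alv q1 q0 a b) = hmult al' alv' q1' q0' (I a) (I b)) \<and>
     I hone = hone"

end

theory Submission
  imports Defs "HOL-Computational_Algebra.Polynomial"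
begin

text \<open>
  Put \<open>u1 = (q1 q0)\<^sup>1\<^sup>/\<^sup>2\<close>, \<open>u0 = (q1 / q0)\<^sup>1\<^sup>/\<^sup>2\<close>, and let \<open>F\<^sub>u\<close> be the quartic with roots
  \<open>u1, -u0, 1/u1, -1/u0\<close>; define \<open>v1, v0, F\<^sub>v\<close> in the same way from \<open>q1', q0'\<close>.
  Apply \<open>I\<close> to the relations \<open>\<theta> T \<theta> = T + (q1 - 1) \<theta>\<^sup>2 + (u1 - u0) \<theta>\<close> and \<open>T\<^sup>2 = (q1 - 1) T + q1\<close> of \<open>H\<close>
  (with \<open>\<theta> = theta alv\<close>) and evaluate the resulting identities in \<open>C[Y']\<close> at a character
  taking the value \<open>X\<close> on \<open>alv'\<close>. The unknown \<open>b'\<close> can then be eliminated, and what remains is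
  \<open>c'\<^sup>2 F\<^sub>v(X) (X\<^sup>2\<^sup>n - 1)\<^sup>2 = F\<^sub>u(c X\<^sup>n) (X\<^sup>2 - 1)\<^sup>2\<close> for all \<open>X\<close>. Evaluating at suitable roots of
  unity forces \<open>n = 1\<close>, and comparing real roots gives \<open>c = 1\<close>, \<open>u1 = v1\<close> and \<open>u0 = v0\<^sup>\<plusminus>\<^sup>1\<close>.
  The values at \<open>X = \<plusminus>1\<close> link the sign to the parity of \<open>k\<close> and determine \<open>c'\<close>.
  Finally, an element \<open>A\<close> of \<open>H'\<close> is determined by its \<open>T\<close>-coefficient together with a
  relation \<open>\<theta> A \<theta> = A + h\<close>. Conjugation by \<open>theta y\<close> preserves such a relation, so the proposed
  value of \<open>I T\<close> satisfies the same relation as \<open>I T\<close> itself.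
\<close>

section \<open>The group algebra\<close>

lemma poly_mapping_sum_single:
  "f = (\<Sum>y\<in>Poly_Mapping.keys f. Poly_Mapping.single y (Poly_Mapping.lookup f y))"
  by (rule poly_mapping_eqI) (simp add: lookup_sum lookup_single when_def in_keys_iff)

lemma additive_sum:
  assumes "\<And>f g. \<phi> (f + g) = \<phi> f + \<phi> g" "\<phi> 0 = 0"
  shows "\<phi> (\<Sum>i\<in>A. f i) = (\<Sum>i\<in>A. \<phi> (f i))"
  by (induction A rule: infinite_finite_induct) (simp_all add: assms)

lemma additive_mult_from_single:
  fixes \<phi> :: "('a::comm_monoid_add \<Rightarrow>\<^sub>0 'b::comm_semiring_1) \<Rightarrow> 'c::comm_semiring_1"
  assumes add: "\<And>f g. \<phi> (f + g) = \<phi> f + \<phi> g" and zero: "\<phi> 0 = 0"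
    and single: "\<And>x a y b. \<phi> (Poly_Mapping.single (x + y) (a * b)) =
        \<phi> (Poly_Mapping.single x a) * \<phi> (Poly_Mapping.single y b)"
  shows "\<phi> (f * g) = \<phi> f * \<phi> g"
proof -
  note sum = additive_sum[of \<phi>, OF add zero]
  have "f * g = (\<Sum>x\<in>Poly_Mapping.keys f. \<Sum>y\<in>Poly_Mapping.keys g.
      Poly_Mapping.single (x + y) (Poly_Mapping.lookup f x * Poly_Mapping.lookup g y))"
    by (subst (1 2) poly_mapping_sum_single) (simp add: sum_product mult_single)
  then show ?thesis
    by (subst (2 3) poly_mapping_sum_single) (simp add: sum single sum_product)
qed

lemma theta_add: "theta (a + b) = theta a * theta b"
  by (simp add: theta_def mult_single)

lemma theta_zero [simp]: "theta 0 = 1"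
  by (simp add: theta_def)

lemma theta_uminus_mult: "theta (- a) * theta a = 1" and theta_mult_uminus: "theta a * theta (- a) = 1"
  by (simp_all flip: theta_add)

lemma cst_mult: "cst (a * b) = cst a * cst b"
  by (simp add: cst_def mult_single)

lemma cst_uminus: "cst (- a) = - cst a"
  by (simp add: cst_def single_uminus)

lemma cst_one [simp]: "cst 1 = 1" and cst_zero [simp]: "cst 0 = 0"
  by (simp_all add: cst_def)

lemma cst_mult_theta: "cst a * theta y = Poly_Mapping.single y a"
  by (simp add: cst_def theta_def mult_single)

lemma lookup_mult_theta: "Poly_Mapping.lookup (h * theta w) y = Poly_Mapping.lookup h (y - w)"
proof -
  have "h * theta w = (\<Sum>x\<in>Poly_Mapping.keys h. Poly_Mapping.single (x + w) (Poly_Mapping.lookup h x))"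
    by (subst poly_mapping_sum_single) (simp add: sum_distrib_right theta_def mult_single)
  then have "Poly_Mapping.lookup (h * theta w) y =
      (\<Sum>x\<in>Poly_Mapping.keys h. if x + w = y then Poly_Mapping.lookup h x else 0)"
    by (simp add: lookup_sum lookup_single when_def)
  also have "\<dots> = (\<Sum>x\<in>Poly_Mapping.keys h. if x = y - w then Poly_Mapping.lookup h x else 0)"
    by (simp only: eq_diff_eq)
  finally show ?thesis
    by (simp add: in_keys_iff)
qed

lemma vector_smult_right_inj:
  fixes w :: "int ^ 'm"
  assumes "w \<noteq> 0" "i *s w = j *s w"
  shows "i = j"
proof -
  from assms(1) obtain t where "w $ t \<noteq> 0" by (metis vec_eq_iff zero_index)
  with assms(2) show ?thesis by (metis mult_right_cancel vector_smult_component)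
qed

text \<open>A nonzero \<open>h\<close> with \<open>h = h * theta w\<close> would be nonzero on the whole infinite orbit \<open>k - m w\<close>.\<close>
lemma mult_one_minus_theta_eq_0:
  fixes h :: "'m::finite grpalg"
  assumes "w \<noteq> 0" "h * (1 - theta w) = 0"
  shows "h = 0"
proof (rule ccontr)
  assume "h \<noteq> 0"
  then obtain k where k: "Poly_Mapping.lookup h k \<noteq> 0"
    by (metis poly_mapping_eqI lookup_zero)
  have shift: "Poly_Mapping.lookup h (y - w) = Poly_Mapping.lookup h y" for y
    using assms(2) lookup_mult_theta[of h w y] by (simp add: algebra_simps)
  have orbit: "Poly_Mapping.lookup h (k - int m *s w) = Poly_Mapping.lookup h k" for m :: nat
  proof (induction m)
    case (Suc m)
    have "k - int (Suc m) *s w = (k - int m *s w) - w"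
      by (simp add: vector_sadd_rdistrib algebra_simps)
    then show ?case by (simp only: shift Suc.IH)
  qed simp
  have "range (\<lambda>m::nat. k - int m *s w) \<subseteq> Poly_Mapping.keys h"
    using orbit k by (auto simp: in_keys_iff)
  moreover have "inj (\<lambda>m::nat. k - int m *s w)"
    by (rule injI) (use vector_smult_right_inj[OF assms(1)] in force)
  ultimately show False
    by (metis finite_imageD finite_keys finite_subset infinite_UNIV_nat)
qed

lemma one_minus_theta_dvd: "1 - theta w dvd 1 - theta (m *s w)"
proof -
  have nat: "1 - theta w dvd 1 - theta (int m *s w)" for m :: nat
  proof (induction m)
    case (Suc m)
    have "1 - theta (int (Suc m) *s w) = (1 - theta (int m *s w)) + theta (int m *s w) * (1 - theta w)"
      by (simp add: algebra_simps theta_add vector_sadd_rdistrib)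
    then show ?case
      using Suc.IH by (metis dvd_add dvd_triv_right)
  qed simp
  show ?thesis
  proof (cases "m \<ge> 0")
    case True
    then show ?thesis using nat[of "nat m"] by simp
  next
    case False
    have "1 - theta (m *s w) = - theta (m *s w) * (1 - theta ((- m) *s w))"
      by (simp add: algebra_simps flip: theta_add vector_sadd_rdistrib)
    then show ?thesis using nat[of "nat (- m)"] False by simp
  qed
qed

section \<open>Evaluation at characters\<close>

definition lin_ext :: "('a \<Rightarrow> complex) \<Rightarrow> ('a \<Rightarrow>\<^sub>0 complex) \<Rightarrow> complex" where
  "lin_ext \<xi> f = (\<Sum>y\<in>Poly_Mapping.keys f. Poly_Mapping.lookup f y * \<xi> y)"

lemma lin_ext_add: "lin_ext \<xi> (f + g) = lin_ext \<xi> f + lin_ext \<xi> g"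
  unfolding lin_ext_def by (rule setsum_keys_plus_distrib) (simp_all add: distrib_right)

lemma lin_ext_zero [simp]: "lin_ext \<xi> 0 = 0"
  by (simp add: lin_ext_def)

lemma lin_ext_single [simp]: "lin_ext \<xi> (Poly_Mapping.single y a) = a * \<xi> y"
  by (cases "a = 0") (simp_all add: lin_ext_def)

lemma lin_ext_diff: "lin_ext \<xi> (f - g) = lin_ext \<xi> f - lin_ext \<xi> g"
  using lin_ext_add[of \<xi> "f - g" g] by simp

lemma lin_ext_one [simp]: "lin_ext \<xi> 1 = \<xi> 0"
  using lin_ext_single[of \<xi> 0 1] by simp

lemma lin_ext_theta [simp]: "lin_ext \<xi> (theta y) = \<xi> y"
  by (simp add: theta_def)

lemma lin_ext_cst [simp]: "lin_ext \<xi> (cst a) = a * \<xi> 0"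
  by (simp add: cst_def)

lemma lin_ext_mult:
  fixes \<xi> :: "'a::comm_monoid_add \<Rightarrow> complex"
  assumes "\<And>x y. \<xi> (x + y) = \<xi> x * \<xi> y"
  shows "lin_ext \<xi> (f * g) = lin_ext \<xi> f * lin_ext \<xi> g"
  by (rule additive_mult_from_single) (simp_all add: lin_ext_add assms)

section \<open>Rank one root data\<close>

lemma pairing_add: "pairing a (x + y) = pairing a x + pairing a y"
  by (simp add: pairing_def distrib_left sum.distrib)

lemma pairing_smult: "pairing a (j *s y) = j * pairing a y"
  by (simp add: pairing_def sum_distrib_left mult_ac)

lemma pairing_smult_left: "pairing (j *s a) y = j * pairing a y"
  by (simp add: pairing_def sum_distrib_left mult_ac)

lemma pairing_diff: "pairing a (x - y) = pairing a x - pairing a y"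
  by (simp add: pairing_def sum_subtractf right_diff_distrib)

lemma mult_Bernstein_denom_eq_0:
  assumes "root_datum al alv" "h * (1 - theta (- (2 *s alv))) = 0"
  shows "h = 0"
proof (rule mult_one_minus_theta_eq_0[OF _ assms(2)])
  show "- (2 *s alv) \<noteq> 0"
    using assms(1) by (auto simp: root_datum_def pairing_def)
qed

lemma smult_two_vec: "(2::int) *s x = x + x"
  by (simp add: vec_eq_iff)

lemma sref_coroot: "root_datum al alv \<Longrightarrow> sref al alv alv = - alv"
  by (simp add: sref_def root_datum_def smult_two_vec)

lemma sref_add: "sref al alv (x + y) = sref al alv x + sref al alv y"
  by (simp add: sref_def pairing_add vector_sadd_rdistrib)

lemma pairing_sref: "root_datum al alv \<Longrightarrow> pairing al (sref al alv y) = - pairing al y"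
  by (simp add: sref_def root_datum_def pairing_diff pairing_smult)

lemma sref_smult_coroot: "root_datum al alv \<Longrightarrow> sref al alv (j *s alv) = (- j) *s alv"
  by (simp add: sref_def root_datum_def pairing_smult vector_smult_assoc
      flip: vector_sub_rdistrib)

lemma sact_single: "sact al alv (Poly_Mapping.single y a) = Poly_Mapping.single (sref al alv y) a"
  by (cases "a = 0") (simp_all add: sact_def)

lemma sact_theta: "sact al alv (theta y) = theta (sref al alv y)"
  by (simp add: theta_def sact_single)

lemma sact_cst: "sact al alv (cst a) = cst a"
  by (simp add: cst_def sact_single sref_def pairing_def)

lemma sact_add: "sact al alv (f + g) = sact al alv f + sact al alv g"
  unfolding sact_def by (rule setsum_keys_plus_distrib) (simp_all add: single_add)

lemma sact_zero [simp]: "sact al alv 0 = 0"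
  by (simp add: sact_def)

lemma sact_mult: "sact al alv (f * g) = sact al alv f * sact al alv g"
  by (rule additive_mult_from_single) (simp_all add: sact_add sact_zero sact_single sref_add mult_single)

lemma lin_ext_sact: "lin_ext \<xi> (sact al alv f) = lin_ext (\<lambda>y. \<xi> (sref al alv y)) f"
proof -
  have "lin_ext \<xi> (sact al alv f) =
      (\<Sum>y\<in>Poly_Mapping.keys f. Poly_Mapping.lookup f y * \<xi> (sref al alv y))"
    unfolding sact_def by (simp add: additive_sum[of "lin_ext \<xi>", OF lin_ext_add lin_ext_zero])
  then show ?thesis
    by (simp add: lin_ext_def)
qed

definition chi :: "'n::finite lat \<Rightarrow> complex \<Rightarrow> 'n lat \<Rightarrow> complex" where
  "chi al z y = z powi pairing al y"

lemma chi_add: "z \<noteq> 0 \<Longrightarrow> chi al z (x + y) = chi al z x * chi al z y"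
  by (simp add: chi_def pairing_add power_int_add)

lemma chi_zero [simp]: "chi al z 0 = 1"
  by (simp add: chi_def pairing_def)

lemma chi_one [simp]: "chi al 1 y = 1"
  by (simp add: chi_def)

lemma chi_sref: "root_datum al alv \<Longrightarrow> chi al z (sref al alv y) = chi al (inverse z) y"
  by (simp add: chi_def pairing_sref power_int_minus power_int_inverse)

lemma chi_coroot: "root_datum al alv \<Longrightarrow> chi al z (j *s alv) = (z\<^sup>2) powi j"
proof -
  assume "root_datum al alv"
  then have "pairing al (j *s alv) = 2 * j"
    by (simp add: pairing_smult root_datum_def)
  then show ?thesis
    by (simp add: chi_def power_int_mult)
qed

lemma lin_ext_chi_mult: "z \<noteq> 0 \<Longrightarrow> lin_ext (chi al z) (f * g) = lin_ext (chi al z) f * lin_ext (chi al z) g"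
  by (simp add: lin_ext_mult chi_add)

lemma lin_ext_chi_sact:
  "root_datum al alv \<Longrightarrow> lin_ext (chi al z) (sact al alv f) = lin_ext (chi al (inverse z)) f"
  by (simp add: lin_ext_sact chi_sref)

section \<open>The Bernstein relation\<close>

lemma Gfac_equal_params:
  "q > 0 \<Longrightarrow> Gfac alv q q = cst (complex_of_real (q - 1)) * (1 + theta (- alv))"
  by (simp add: Gfac_def algebra_simps flip: cst_mult)

text \<open>When \<open>\<langle>al, y\<rangle>\<close> is odd, \<open>al \<notin> 2X\<close> forces \<open>q1 = q0\<close>, and then \<open>Gfac\<close> supplies the missing
  factor \<open>1 + theta (- alv)\<close> of the denominator.\<close>
lemma denom_dvd_Bernstein_numerator:
  assumes rd: "root_datum al alv" and eq: "\<not> in2X al \<longrightarrow> q1 = q0" and q1: "q1 > 0"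
  shows "theta 0 - theta (- (2 *s alv)) dvd Gfac alv q1 q0 * (theta y - theta (sref al alv y))"
proof -
  define p where "p = pairing al y"
  have num: "theta y - theta (sref al alv y) = theta y * (1 - theta (p *s (- alv)))"
    by (simp add: sref_def p_def algebra_simps vector_smult_rneg flip: theta_add)
  show ?thesis
  proof (cases "even p")
    case True
    then obtain j where "p = 2 * j" by blast
    then have "p *s (- alv) = j *s (- (2 *s alv))"
      by (simp add: vector_smult_assoc vector_smult_rneg mult.commute)
    then show ?thesis
      using one_minus_theta_dvd[of "- (2 *s alv)" j] by (simp add: num)
  next
    case False
    have "\<not> in2X al"
    proof
      assume "in2X al"
      then obtain x where "al = 2 *s x" by (auto simp: in2X_def)
      with False show False by (simp add: p_def pairing_smult_left)
    qed
    then have G: "Gfac alv q1 q0 = cst (complex_of_real (q1 - 1)) * (1 + theta (- alv))"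
      using eq q1 Gfac_equal_params by auto
    have D: "theta 0 - theta (- (2 *s alv)) = (1 + theta (- alv)) * (1 - theta (- alv))"
      by (simp add: algebra_simps smult_two_vec flip: theta_add)
    show ?thesis
      unfolding G D num
      using one_minus_theta_dvd[of "- alv" p] by (simp add: mult_dvd_mono)
  qed
qed

lemma bern_eqI:
  assumes rd: "root_datum al alv"
    and h: "h * (1 - theta (- (2 *s alv))) = Gfac alv q1 q0 * (theta y - theta (sref al alv y))"
  shows "bern al alv q1 q0 y = h"
  unfolding bern_def
proof (rule the_equality)
  fix h'
  assume "h' * (theta 0 - theta (- (2 *s alv))) = Gfac alv q1 q0 * (theta y - theta (sref al alv y))"
  with h have "(h' - h) * (1 - theta (- (2 *s alv))) = 0"
    by (simp add: left_diff_distrib)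
  then show "h' = h"
    using mult_Bernstein_denom_eq_0[OF rd] by (metis right_minus_eq)
qed (use h in simp)

lemma bern_mult_denom:
  assumes rd: "root_datum al alv" and "\<not> in2X al \<longrightarrow> q1 = q0" and "q1 > 0"
  shows "bern al alv q1 q0 y * (1 - theta (- (2 *s alv))) =
    Gfac alv q1 q0 * (theta y - theta (sref al alv y))"
proof -
  obtain h where h: "Gfac alv q1 q0 * (theta y - theta (sref al alv y)) = (theta 0 - theta (- (2 *s alv))) * h"
    using denom_dvd_Bernstein_numerator[OF assms, of y] by (elim dvdE)
  then show ?thesis
    using bern_eqI[OF rd, of h] by (simp add: mult.commute)
qed

lemma bern_zero: "root_datum al alv \<Longrightarrow> bern al alv q1 q0 0 = 0"
  by (rule bern_eqI) (simp_all add: sref_def pairing_def)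

lemma bern_coroot: "root_datum al alv \<Longrightarrow> bern al alv q1 q0 alv = Gfac alv q1 q0 * theta alv"
proof (rule bern_eqI)
  assume rd: "root_datum al alv"
  have "theta alv * theta (- (2 *s alv)) = theta (- alv)"
    by (simp add: smult_two_vec flip: theta_add)
  then show "Gfac alv q1 q0 * theta alv * (1 - theta (- (2 *s alv))) =
      Gfac alv q1 q0 * (theta alv - theta (sref al alv alv))"
    by (simp add: sref_coroot[OF rd] right_diff_distrib mult.assoc)
qed

lemma Qop_zero [simp]: "Qop al alv q1 q0 0 = 0"
  by (simp add: Qop_def)

lemma Qop_theta: "Qop al alv q1 q0 (theta y) = bern al alv q1 q0 y"
  by (simp add: Qop_def theta_def)

lemma Qop_mult_denom:
  assumes "root_datum al alv" and "\<not> in2X al \<longrightarrow> q1 = q0" and "q1 > 0"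
  shows "Qop al alv q1 q0 f * (1 - theta (- (2 *s alv))) = Gfac alv q1 q0 * (f - sact al alv f)"
proof -
  have f: "f = (\<Sum>y\<in>Poly_Mapping.keys f. cst (Poly_Mapping.lookup f y) * theta y)"
    by (subst poly_mapping_sum_single) (simp add: cst_mult_theta)
  have sf: "sact al alv f = (\<Sum>y\<in>Poly_Mapping.keys f. cst (Poly_Mapping.lookup f y) * theta (sref al alv y))"
    by (simp add: sact_def cst_mult_theta)
  have "Qop al alv q1 q0 f * (1 - theta (- (2 *s alv))) =
      (\<Sum>y\<in>Poly_Mapping.keys f. cst (Poly_Mapping.lookup f y) *
         (bern al alv q1 q0 y * (1 - theta (- (2 *s alv)))))"
    by (simp add: Qop_def sum_distrib_right mult.assoc)
  also have "\<dots> = (\<Sum>y\<in>Poly_Mapping.keys f. cst (Poly_Mapping.lookup f y) *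
         (Gfac alv q1 q0 * (theta y - theta (sref al alv y))))"
    by (simp only: bern_mult_denom[OF assms])
  also have "\<dots> = Gfac alv q1 q0 *
      ((\<Sum>y\<in>Poly_Mapping.keys f. cst (Poly_Mapping.lookup f y) * theta y) -
       (\<Sum>y\<in>Poly_Mapping.keys f. cst (Poly_Mapping.lookup f y) * theta (sref al alv y)))"
    by (simp add: sum_distrib_left right_diff_distrib mult_ac sum_subtractf)
  finally show ?thesis
    by (metis f sf)
qed

lemma Qop_mult:
  assumes rd: "root_datum al alv" and "\<not> in2X al \<longrightarrow> q1 = q0" and "q1 > 0"
  shows "Qop al alv q1 q0 (f * g) = Qop al alv q1 q0 f * g + sact al alv f * Qop al alv q1 q0 g"
proof -
  let ?Q = "Qop al alv q1 q0" and ?D = "1 - theta (- (2 *s alv))"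
  have "(?Q (f * g) - (?Q f * g + sact al alv f * ?Q g)) * ?D =
      ?Q (f * g) * ?D - g * (?Q f * ?D) - sact al alv f * (?Q g * ?D)"
    by (simp add: algebra_simps)
  also have "\<dots> = 0"
    by (simp only: Qop_mult_denom[OF assms]) (simp add: sact_mult algebra_simps)
  finally have "(?Q (f * g) - (?Q f * g + sact al alv f * ?Q g)) * ?D = 0" .
  then show ?thesis
    using mult_Bernstein_denom_eq_0[OF rd] by (metis right_minus_eq)
qed

lemma lin_ext_chi_Qop:
  assumes "root_datum al alv" and "\<not> in2X al \<longrightarrow> q1 = q0" and "q1 > 0" and z: "z \<noteq> 0"
  shows "lin_ext (chi al z) (Qop al alv q1 q0 f) * (1 - inverse (z\<^sup>2) ^ 2) =
    (complex_of_real (q1 - 1) + inverse (z\<^sup>2) * complex_of_real (sqrt q1 * sqrt q0 - sqrt q1 / sqrt q0))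
      * (lin_ext (chi al z) f - lin_ext (chi al (inverse z)) f)"
proof -
  have "- (2 *s alv) = (- 2) *s alv" and "- alv = (- 1) *s alv"
    by (simp_all add: vector_smult_lneg)
  then have "chi al z (- (2 *s alv)) = inverse (z\<^sup>2) ^ 2" and "chi al z (- alv) = inverse (z\<^sup>2)"
    using chi_coroot[OF assms(1), of z] by (simp_all add: power_int_minus power_inverse)
  with arg_cong[OF Qop_mult_denom[OF assms(1-3)], of "lin_ext (chi al z)"] show ?thesis
    by (simp add: lin_ext_chi_mult[OF z] lin_ext_diff lin_ext_add lin_ext_chi_sact[OF assms(1)] Gfac_def
        del: of_real_diff)
qed

section \<open>Computing in the affine Hecke algebra\<close>

lemma hmult_pair:
  "hmult al alv q1 q0 (f1, g1) (f2, g2) =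
     (f1 * f2 + g1 * Qop al alv q1 q0 f2 + cst (complex_of_real q1) * g1 * sact al alv g2,
      f1 * g2 + g1 * sact al alv f2 + g1 * Qop al alv q1 q0 g2
        + cst (complex_of_real (q1 - 1)) * g1 * sact al alv g2)"
  by (simp add: hmult_def)

lemma hadd_emb_combination:
  "hadd a (hadd (hscale s (hmult al alv q1 q0 (emb x) (emb x))) (hscale t (emb x))) =
    hadd a (emb (cst s * x * x + cst t * x))"
  by (simp add: hadd_def hscale_def emb_def hmult_def mult.assoc)

lemma Qop_theta_coroot:
  assumes "root_datum al alv"
  shows "Qop al alv q1 q0 (theta alv) = cst (complex_of_real (q1 - 1)) * theta alv
    + cst (complex_of_real (sqrt q1 * sqrt q0 - sqrt q1 / sqrt q0))"
proof -
  have "Gfac alv q1 q0 * theta alv = cst (complex_of_real (q1 - 1)) * theta alv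
    + cst (complex_of_real (sqrt q1 * sqrt q0 - sqrt q1 / sqrt q0)) * (theta (- alv) * theta alv)"
    by (simp add: Gfac_def algebra_simps)
  then show ?thesis
    by (simp add: Qop_theta bern_coroot[OF assms] theta_uminus_mult)
qed

lemma theta_T_theta:
  assumes "root_datum al alv"
  shows "hmult al alv q1 q0 (hmult al alv q1 q0 (emb (theta alv)) Tgen) (emb (theta alv)) =
    hadd Tgen (hadd (hscale (complex_of_real (q1 - 1)) (hmult al alv q1 q0 (emb (theta alv)) (emb (theta alv))))
      (hscale (complex_of_real (sqrt q1 * sqrt q0 - sqrt q1 / sqrt q0)) (emb (theta alv))))"
  unfolding hadd_emb_combination
  by (simp add: Tgen_def hadd_def emb_def hmult_pair Qop_theta_coroot[OF assms] sact_theta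
      sref_coroot[OF assms] theta_mult_uminus algebra_simps)

lemma theta_T0_theta:
  assumes rd: "root_datum al alv" and "q1 > 0" "q0 > 0"
  defines "T0 \<equiv> hscale (complex_of_real (sqrt q0 / sqrt q1))
    (hadd (hmult al alv q1 q0 (emb (theta alv)) Tgen) (hscale (- complex_of_real (q1 - 1)) (emb (theta alv))))"
  shows "hmult al alv q1 q0 (hmult al alv q1 q0 (emb (theta alv)) T0) (emb (theta alv)) =
    hadd T0 (emb (cst (complex_of_real (q0 - 1)) * theta alv * theta alv
      + cst (complex_of_real (sqrt q0 * sqrt q1 - sqrt q0 / sqrt q1)) * theta alv))"
proof -
  define \<gamma> a d a0 d0 where "\<gamma> = complex_of_real (sqrt q0 / sqrt q1)"
    and "a = complex_of_real (q1 - 1)" and "d = complex_of_real (sqrt q1 * sqrt q0 - sqrt q1 / sqrt q0)"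
    and "a0 = complex_of_real (q0 - 1)" and "d0 = complex_of_real (sqrt q0 * sqrt q1 - sqrt q0 / sqrt q1)"
  have "\<gamma> * d = a0" and "\<gamma> * a = d0"
    using assms(2,3) by (simp_all add: \<gamma>_def a_def d_def a0_def d0_def field_simps flip: of_real_mult)
  then have cst: "cst \<gamma> * cst d = cst a0" "cst \<gamma> * cst a = cst d0"
    by (simp_all flip: cst_mult)
  have T0: "T0 = (- (cst \<gamma> * cst a * theta alv), cst \<gamma> * theta alv)"
    unfolding T0_def \<gamma>_def[symmetric] a_def[symmetric]
    by (simp add: hscale_def hadd_def emb_def Tgen_def hmult_pair cst_uminus)
  have "Qop al alv q1 q0 (theta alv) = cst a * theta alv + cst d"
    by (simp add: Qop_theta_coroot[OF rd] a_def d_def)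
  then show ?thesis
    unfolding T0 a0_def[symmetric] d0_def[symmetric] cst[symmetric]
    by (simp add: hadd_def emb_def hmult_pair sact_theta sref_coroot[OF rd] algebra_simps)
       (simp add: mult.left_commute[of "theta alv"] theta_mult_uminus)
qed

lemma T_square:
  assumes "root_datum al alv"
  shows "hmult al alv q1 q0 Tgen Tgen =
    hadd (hscale (complex_of_real (q1 - 1)) Tgen) (hscale (complex_of_real q1) hone)"
proof -
  have "Qop al alv q1 q0 1 = 0"
    using bern_zero[OF assms] by (simp add: Qop_def)
  then show ?thesis
    by (simp add: Tgen_def hone_def hmult_pair hadd_def hscale_def sact_cst[of _ _ 1, simplified])
qed

text \<open>The difference \<open>\<delta>\<close> of the first components satisfies \<open>\<theta>\<^sup>2 \<delta> = \<delta>\<close>.\<close>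
lemma theta_conj_eq_unique:
  assumes rd: "root_datum al alv"
    and a: "hmult al alv q1 q0 (hmult al alv q1 q0 (emb (theta alv)) a) (emb (theta alv)) = hadd a (emb h)"
    and b: "hmult al alv q1 q0 (hmult al alv q1 q0 (emb (theta alv)) b) (emb (theta alv)) = hadd b (emb h)"
    and snd: "snd a = snd b"
  shows "a = b"
proof -
  obtain f f' g where ab: "a = (f, g)" "b = (f', g)"
    using snd by (metis prod.collapse)
  let ?t = "theta alv" and ?X = "g * Qop al alv q1 q0 (theta alv)"
  have "?t * f * ?t + ?t * ?X = f + h" "?t * f' * ?t + ?t * ?X = f' + h"
    using a b by (simp_all add: ab hmult_pair hadd_def emb_def mult.assoc)
  moreover have "(f - f') * (?t * ?t) = (?t * f * ?t + ?t * ?X) - (?t * f' * ?t + ?t * ?X)"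
    by (simp add: algebra_simps)
  ultimately have "(f - f') * (?t * ?t) = f - f'"
    by simp
  then have "(f - f') * (1 - theta (- (2 *s alv))) = (f - f') * (?t * ?t * theta (- (2 *s alv)))
      - (f - f') * theta (- (2 *s alv))"
    by (simp add: smult_two_vec algebra_simps flip: theta_add)
  also have "\<dots> = 0"
    using \<open>(f - f') * (?t * ?t) = f - f'\<close> by (simp add: mult.assoc[symmetric])
  finally have "f - f' = 0"
    by (rule mult_Bernstein_denom_eq_0[OF rd])
  then show ?thesis
    using ab by simp
qed

text \<open>Conjugation by \<open>theta y\<close> commutes with multiplication by \<open>theta alv\<close> on both sides; on
  components this is the twisted Leibniz rule for \<open>Qop (theta (- y) * theta alv)\<close>.\<close>
lemma theta_conj_eq_conjugate:
  fixes y :: "'n::finite lat"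
  assumes rd: "root_datum al alv" and eq: "\<not> in2X al \<longrightarrow> q1 = q0" and q1: "q1 > 0"
    and a: "hmult al alv q1 q0 (hmult al alv q1 q0 (emb (theta alv)) a) (emb (theta alv)) = hadd a (emb h)"
  shows "hmult al alv q1 q0 (hmult al alv q1 q0 (emb (theta alv))
      (hmult al alv q1 q0 (hmult al alv q1 q0 (emb (theta y)) a) (emb (theta (- y))))) (emb (theta alv))
    = hadd (hmult al alv q1 q0 (hmult al alv q1 q0 (emb (theta y)) a) (emb (theta (- y)))) (emb h)"
proof -
  obtain f g where fg: "a = (f, g)"
    by fastforce
  let ?Q = "Qop al alv q1 q0" and ?s = "sact al alv"
  let ?t = "theta alv" and ?u = "theta y" and ?v = "theta (- y)"
  have hf: "?t * f * ?t + ?t * g * ?Q ?t = f + h" and hg: "?t * g * ?s ?t = g"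
    using a by (simp_all add: fg hmult_pair hadd_def emb_def)
  have uv: "?u * ?v = 1"
    by (rule theta_mult_uminus)
  have leibniz: "?Q ?v * ?t + ?s ?v * ?Q ?t = ?Q ?t * ?v + ?s ?t * ?Q ?v"
    using Qop_mult[OF rd eq q1, of ?v ?t] Qop_mult[OF rd eq q1, of ?t ?v] by (simp add: mult.commute)
  have "?t * (?u * f * ?v + ?u * g * ?Q ?v) * ?t + ?t * (?u * g * ?s ?v) * ?Q ?t
      = ?u * ?v * (?t * f * ?t) + ?t * ?u * g * (?Q ?v * ?t + ?s ?v * ?Q ?t)"
    by (simp add: algebra_simps)
  also have "\<dots> = ?u * ?v * (?t * f * ?t + ?t * g * ?Q ?t) + ?u * (?t * g * ?s ?t) * ?Q ?v"
    unfolding leibniz by (simp add: algebra_simps)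
  also have "\<dots> = ?u * ?v * f + ?u * g * ?Q ?v + h"
    by (simp add: hf hg uv)
  also have "\<dots> = ?u * f * ?v + ?u * g * ?Q ?v + h"
    by (simp add: mult_ac)
  finally have fst: "?t * (?u * f * ?v + ?u * g * ?Q ?v) * ?t + ?t * (?u * g * ?s ?v) * ?Q ?t
      = ?u * f * ?v + ?u * g * ?Q ?v + h" .
  have "?t * (?u * g * ?s ?v) * ?s ?t = ?u * ?s ?v * (?t * g * ?s ?t)"
    by (simp add: mult_ac)
  also have "\<dots> = ?u * g * ?s ?v"
    by (simp only: hg) (simp add: mult_ac)
  finally show ?thesis
    using fst
    unfolding fg by (simp add: hmult_pair hadd_def emb_def)
qed

section \<open>Scalar identities\<close>

text \<open>\<open>rho a d X = (a + d / X) / (1 - X\<^sup>-\<^sup>2)\<close> is the value of \<open>Gfac / (1 - theta (-2 alv))\<close> at a character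
  taking the value \<open>X\<close> on \<open>alv\<close>, with \<open>a = q1 - 1\<close> and \<open>d = q1\<^sup>1\<^sup>/\<^sup>2 q0\<^sup>1\<^sup>/\<^sup>2 - q1\<^sup>1\<^sup>/\<^sup>2 q0\<^sup>-\<^sup>1\<^sup>/\<^sup>2\<close>.\<close>
definition rho :: "'a::field \<Rightarrow> 'a \<Rightarrow> 'a \<Rightarrow> 'a" where
  "rho a d X = (a * X\<^sup>2 + d * X) / (X\<^sup>2 - 1)"

lemma rho_eqI:
  fixes X :: "'a::field"
  assumes "X \<noteq> 0" "X\<^sup>2 \<noteq> 1" "W * (1 - inverse X ^ 2) = (a + inverse X * d) * Z"
  shows "W = rho a d X * Z"
proof -
  have "W * (X\<^sup>2 - 1) = X\<^sup>2 * (W * (1 - inverse X ^ 2))"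
    using assms(1) by (simp add: algebra_simps power_inverse)
  also have "\<dots> = (X\<^sup>2 * (a + inverse X * d)) * Z"
    by (simp add: assms(3))
  also have "X\<^sup>2 * (a + inverse X * d) = a * X\<^sup>2 + d * X"
    using assms(1) by (simp add: field_simps power2_eq_square)
  finally show ?thesis
    using assms(2) by (simp add: rho_def field_simps)
qed

lemma rho_add_rho_inverse:
  fixes X :: "'a::field"
  assumes "X \<noteq> 0" "X\<^sup>2 \<noteq> 1"
  shows "rho a d X + rho a d (inverse X) = a"
proof -
  have "rho a d (inverse X) = - (a + d * X) / (X\<^sup>2 - 1)"
    using assms by (simp add: rho_def field_simps power2_eq_square)
  then have "rho a d X + rho a d (inverse X) = a * (X\<^sup>2 - 1) / (X\<^sup>2 - 1)"
    by (simp add: rho_def add_divide_distrib[symmetric] algebra_simps)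
  then show ?thesis
    using assms(2) by simp
qed

lemma rho_solve:
  fixes Y :: "'a::field"
  assumes "Y\<^sup>2 \<noteq> 1" and "Y * B * Y + Y * p * w = B + (a * Y * Y + d * Y)" and "Y * w = r * (Y\<^sup>2 - 1)"
  shows "B = rho a d Y - p * r"
proof -
  have "B * (Y\<^sup>2 - 1) = (Y * B * Y + Y * p * w - B) - p * (Y * w)"
    by (simp add: algebra_simps power2_eq_square)
  also have "\<dots> = (a * Y * Y + d * Y) - p * (r * (Y\<^sup>2 - 1))"
    using assms(2) by (simp only: assms(3)) (simp add: algebra_simps)
  finally show ?thesis
    using assms(1) by (simp add: rho_def field_simps power2_eq_square)
qed

lemma quadratic_relation_eliminated:
  fixes B B' \<rho> \<rho>' r r' p p' \<kappa> Q Q' :: "'a::comm_ring_1"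
  assumes B: "B = \<rho> - p * r" and B': "B' = \<rho>' - p' * r'" and "\<rho> + \<rho>' = Q - 1" "r + r' = Q' - 1"
    and \<kappa>: "p * p' = \<kappa>"
    and quadratic: "B * B + p * (r * (B - B')) + Q' * \<kappa> = (Q - 1) * B + Q"
  shows "\<kappa> * ((Q' - r) * (1 + r)) = (Q - \<rho>) * (1 + \<rho>)"
proof -
  have \<rho>': "\<rho>' = Q - 1 - \<rho>" and r': "r' = Q' - 1 - r"
    using assms(3,4) by (simp_all add: algebra_simps)
  have "\<kappa> * ((Q' - r) * (1 + r)) - (Q - \<rho>) * (1 + \<rho>) =
      (B * B + p * (r * (B - B')) + Q' * \<kappa>) - ((Q - 1) * B + Q)"
    unfolding B B' \<rho>' r' \<kappa>[symmetric] by (simp add: algebra_simps)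
  then show ?thesis
    using quadratic by simp
qed

definition quartic :: "complex \<Rightarrow> complex \<Rightarrow> complex poly" where
  "quartic u1 u0 = [:- u1, 1:] * [:u0, 1:] * [:- 1, u1:] * [:1, u0:]"

lemma poly_quartic: "poly (quartic u1 u0) X = (X - u1) * (X + u0) * (u1 * X - 1) * (u0 * X + 1)"
  by (simp add: quartic_def algebra_simps)

lemma rho_quadratic:
  fixes X :: complex
  assumes "X\<^sup>2 \<noteq> 1"
  shows "(u1 * u0 - rho (u1 * u0 - 1) (u1 - u0) X) * (1 + rho (u1 * u0 - 1) (u1 - u0) X)
    = poly (quartic u1 u0) X / (X\<^sup>2 - 1)\<^sup>2"
proof -
  have "X\<^sup>2 - 1 \<noteq> 0"
    using assms by simp
  then have "u1 * u0 - rho (u1 * u0 - 1) (u1 - u0) X = (X - u1) * (X + u0) / (X\<^sup>2 - 1)"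
    and "1 + rho (u1 * u0 - 1) (u1 - u0) X = (u1 * X - 1) * (u0 * X + 1) / (X\<^sup>2 - 1)"
    by (simp_all add: rho_def field_simps) (simp_all add: algebra_simps power2_eq_square)
  then show ?thesis
    by (simp add: poly_quartic power2_eq_square)
qed

section \<open>Roots of the quartic\<close>

lemma poly_quartic_of_real_eq_0_iff:
  "poly (quartic (of_real u1) (of_real u0)) (of_real t) = 0 \<longleftrightarrow>
    t = u1 \<or> t = - u0 \<or> u1 * t = 1 \<or> u0 * t = - 1"
proof -
  have eq: "poly (quartic (of_real u1) (of_real u0)) (of_real t) =
      of_real ((t - u1) * (t + u0) * (u1 * t - 1) * (u0 * t + 1))"
    by (simp add: poly_quartic)
  show ?thesis
    unfolding eq of_real_eq_0_iff mult_eq_0_iff by (simp add: eq_neg_iff_add_eq_0)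
qed

lemma quartic_positive_root:
  assumes "0 < u0" "0 < u1" "0 < t" "poly (quartic (of_real u1) (of_real u0)) (of_real t) = 0"
  shows "t = u1 \<or> u1 * t = 1"
proof -
  have "t = u1 \<or> t = - u0 \<or> u1 * t = 1 \<or> u0 * t = - 1"
    using assms(4) by (simp only: poly_quartic_of_real_eq_0_iff)
  moreover have "u0 * t \<noteq> - 1"
    using mult_pos_pos[OF assms(1,3)] by linarith
  ultimately show ?thesis
    using assms(1-3) by auto
qed

lemma quartic_negative_root:
  assumes "0 < u0" "0 < u1" "0 < t" "poly (quartic (of_real u1) (of_real u0)) (- of_real t) = 0"
  shows "t = u0 \<or> u0 * t = 1"
proof -
  have "poly (quartic (of_real u1) (of_real u0)) (of_real (- t)) = 0"
    using assms(4) by simp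
  then have "- t = u1 \<or> - t = - u0 \<or> u1 * - t = 1 \<or> u0 * - t = - 1"
    by (simp only: poly_quartic_of_real_eq_0_iff)
  moreover have "u1 * t \<noteq> - 1"
    using mult_pos_pos[OF assms(2,3)] by linarith
  ultimately show ?thesis
    using assms(1-3) by auto
qed

lemma poly_eqI_on_reals_gt_1:
  fixes p q :: "complex poly"
  assumes "\<And>r::real. r > 1 \<Longrightarrow> poly p (of_real r) = poly q (of_real r)"
  shows "p = q"
proof (rule ccontr)
  assume "p \<noteq> q"
  then have "finite {x. poly (p - q) x = 0}"
    by (intro poly_roots_finite) simp
  moreover have "of_real ` {1<..} \<subseteq> {x. poly (p - q) x = 0}"
    using assms by auto
  moreover have "inj_on (of_real :: real \<Rightarrow> complex) {1<..}"
    by (simp add: inj_on_def)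
  ultimately have "finite {(1::real)<..}"
    by (metis finite_imageD finite_subset)
  then show False
    using infinite_Ioi by blast
qed

lemma one_less_of_real_power:
  assumes "(r::real) > 1" "m > 0"
  shows "(of_real r :: complex) ^ m \<noteq> 1"
  using one_less_power[OF assms] by (metis less_irrefl of_real_eq_1_iff of_real_power)

lemma cis_power_eq_1_imp_dvd:
  assumes "n > 0" "cis (2 * pi * real j / real n) = 1"
  shows "n dvd j"
proof -
  obtain m :: int where "2 * pi * real j / real n = real_of_int m * 2 * pi"
    using assms(2) cos_one_2pi_int by (metis cis.sel(1) one_complex.sel(1))
  then have "real j = real_of_int m * real n"
    using assms(1) pi_gt_zero by (simp add: field_simps)
  then have "int j = m * int n"
    by (metis of_int_eq_iff of_int_mult of_int_of_nat_eq)
  then show ?thesis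
    by (metis dvd_triv_right int_dvd_int_iff mult.commute)
qed

lemma cis_root_of_minus_one:
  assumes "2 \<le> n"
  shows "cis (pi / real n) ^ n = - 1" and "(cis (pi / real n))\<^sup>2 \<noteq> 1"
proof -
  show "cis (pi / real n) ^ n = - 1"
    using assms by (simp add: DeMoivre)
  show "(cis (pi / real n))\<^sup>2 \<noteq> 1"
  proof
    assume "(cis (pi / real n))\<^sup>2 = 1"
    then have "cis (2 * pi * real 1 / real n) = 1"
      by (simp add: DeMoivre)
    with assms show False
      using cis_power_eq_1_imp_dvd[of n 1] by simp
  qed
qed

lemma cis_root_of_one:
  assumes "3 \<le> n"
  shows "cis (2 * pi / real n) ^ n = 1" and "(cis (2 * pi / real n))\<^sup>2 \<noteq> 1"
proof -
  show "cis (2 * pi / real n) ^ n = 1"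
    using assms by (simp add: DeMoivre)
  show "(cis (2 * pi / real n))\<^sup>2 \<noteq> 1"
  proof
    assume "(cis (2 * pi / real n))\<^sup>2 = 1"
    then have "cis (2 * pi * real 2 / real n) = 1"
      by (simp add: DeMoivre)
    then have "n dvd 2"
      using assms cis_power_eq_1_imp_dvd[of n 2] by simp
    with assms show False
      using dvd_imp_le[of n 2] by simp
  qed
qed

lemma one_less_larger_factor:
  fixes u1 u0 :: real
  assumes "0 < u0" "u0 < u1" "1 < u1 * u0"
  shows "1 < u1"
proof (rule ccontr)
  assume "\<not> 1 < u1"
  then have "u1 * u0 \<le> 1 * 1"
    using assms by (intro mult_mono) auto
  with assms show False
    by simp
qed

lemma quartic_identity_not_degree_two:
  fixes u1 v1 v0 :: real and c' :: complex
  assumes u1: "1 < u1" and v: "0 < v0" "v0 < v1" "1 < v1 * v0" and c': "c' \<noteq> 0"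
    and identity: "\<And>X. c'\<^sup>2 * poly (quartic (of_real v1) (of_real v0)) X * (X ^ 4 - 1)\<^sup>2 =
      poly (quartic (of_real u1) 1) (X\<^sup>2) * (X\<^sup>2 - 1)\<^sup>2"
  shows False
proof -
  let ?G = "poly (quartic (of_real v1) (of_real v0))"
  define r where "r = sqrt u1"
  have r: "1 < r" "r\<^sup>2 = u1"
    using u1 by (auto simp: r_def)
  have v1: "1 < v1"
    using one_less_larger_factor v by blast
  have "(of_real r :: complex) ^ 4 \<noteq> 1"
    by (rule one_less_of_real_power) (use r in auto)
  moreover have "poly (quartic (of_real u1) 1) (of_real u1) = 0"
    by (simp add: poly_quartic)
  ultimately have "?G X = 0" if "X = of_real r \<or> X = - of_real r" for X
    using identity[of X] that c' r(2) by (auto simp flip: of_real_power)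
  then have "r = v1 \<or> v1 * r = 1" and "r = v0 \<or> v0 * r = 1"
    using quartic_positive_root[of v0 v1 r] quartic_negative_root[of v0 v1 r] v v1 r by auto
  moreover have "v1 * r > 1"
    using r v1 less_1_mult[of v1 r] by auto
  ultimately have "v0 = v1 \<or> v0 * v1 = 1"
    by auto
  moreover have "v0 * v1 = v1 * v0"
    by (rule mult.commute)
  ultimately show False
    using v by linarith
qed

lemma quartic_identity_degree_one:
  fixes u1 u0 v1 v0 :: real and c c' :: complex
  assumes u: "0 < u0" "u0 < u1" "1 < u1 * u0" and v: "0 < v0" "v0 < v1" "1 < v1 * v0"
    and c: "c\<^sup>2 = 1" and c': "c' \<noteq> 0" and n: "n > 0"
    and identity: "\<And>X. c'\<^sup>2 * poly (quartic (of_real v1) (of_real v0)) X * (X ^ (2 * n) - 1)\<^sup>2 =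
      poly (quartic (of_real u1) (of_real u0)) (c * X ^ n) * (X\<^sup>2 - 1)\<^sup>2"
  shows "n = 1"
proof (rule ccontr)
  let ?F = "poly (quartic (of_real u1) (of_real u0))"
  assume "n \<noteq> 1"
  with n have n2: "2 \<le> n"
    by simp
  have u1: "1 < u1"
    using one_less_larger_factor u by blast
  have F_one: "?F 1 \<noteq> 0"
    using poly_quartic_of_real_eq_0_iff[of u1 u0 1] u u1 by auto
  have "?F (- c) = 0"
    using identity[of "cis (pi / real n)"] cis_root_of_minus_one[OF n2]
    by (simp add: power_mult mult.commute[of 2 n])
  moreover have "c = 1 \<or> c = - 1"
    using c by (simp add: power2_eq_1_iff)
  ultimately have c1: "c = 1" and "?F (- 1) = 0"
    using F_one by auto
  then have u0: "u0 = 1"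
    using poly_quartic_of_real_eq_0_iff[of u1 u0 "- 1"] u u1 by auto
  show False
  proof (cases "n = 2")
    case True
    have "c'\<^sup>2 * poly (quartic (of_real v1) (of_real v0)) X * (X ^ 4 - 1)\<^sup>2 =
        poly (quartic (of_real u1) 1) (X\<^sup>2) * (X\<^sup>2 - 1)\<^sup>2" for X
      using identity[of X] True c1 u0 by simp
    then show False
      by (rule quartic_identity_not_degree_two[OF u1 v c'])
  next
    case False
    with n2 have "3 \<le> n"
      by simp
    then have "?F c = 0"
      using identity[of "cis (2 * pi / real n)"] cis_root_of_one
      by (simp add: power_mult mult.commute[of 2 n])
    with c1 F_one show False
      by simp
  qed
qed

lemma quartic_roots_swapped_impossible:
  fixes u1 u0 v1 v0 :: real
  assumes u: "0 < u0" "u0 < u1" "1 < u1 * u0" and v: "0 < v0" "v0 < v1" "1 < v1 * v0"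
    and A: "u1 = v0 \<or> v0 * u1 = 1" and B: "u0 = v1 \<or> v1 * u0 = 1"
  shows False
  using A
proof
  assume "u1 = v0"
  then have "v1 * u0 = 1"
    using B u v by auto
  moreover have "u1 * u0 < v1 * u0"
    using \<open>u1 = v0\<close> u v by (simp add: mult_strict_right_mono)
  ultimately show False
    using u by linarith
next
  assume "v0 * u1 = 1"
  show False
    using B
  proof
    assume "u0 = v1"
    then have "v0 * v1 < v0 * u1"
      using u v by (simp add: mult_strict_left_mono)
    moreover have "v0 * v1 = v1 * v0"
      by (rule mult.commute)
    ultimately show False
      using \<open>v0 * u1 = 1\<close> v by linarith
  next
    assume "v1 * u0 = 1"
    have "(v1 * v0) * (u1 * u0) > 1"
      using less_1_mult[OF v(3) u(3)] .
    moreover have "(v1 * v0) * (u1 * u0) = (v1 * u0) * (v0 * u1)"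
      by (simp add: mult_ac)
    ultimately show False
      using \<open>v0 * u1 = 1\<close> \<open>v1 * u0 = 1\<close> by simp
  qed
qed

lemma quartic_identity_parameters:
  fixes u1 u0 v1 v0 :: real and c c' :: complex
  assumes u: "0 < u0" "u0 < u1" "1 < u1 * u0" and v: "0 < v0" "v0 < v1" "1 < v1 * v0"
    and c: "c\<^sup>2 = 1" and c': "c' \<noteq> 0"
    and identity: "\<And>X. c'\<^sup>2 * poly (quartic (of_real v1) (of_real v0)) X =
      poly (quartic (of_real u1) (of_real u0)) (c * X)"
  shows "c = 1 \<and> u1 = v1 \<and> (u0 = v0 \<or> v0 * u0 = 1)"
proof -
  let ?F = "poly (quartic (of_real u1) (of_real u0))" and ?G = "poly (quartic (of_real v1) (of_real v0))"
  have u1: "1 < u1" and v1: "1 < v1"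
    using one_less_larger_factor u v by blast+
  have cc: "c * c = 1"
    using c by (simp add: power2_eq_square)
  have G_root: "?G (c * t) = 0" if "?F t = 0" for t
    using identity[of "c * t"] that c' by (simp add: cc flip: mult.assoc)
  have "?G (c * of_real u1) = 0" "?G (c * - of_real u0) = 0"
    by (rule G_root, simp add: poly_quartic)+
  moreover have "c = 1 \<or> c = - 1"
    using c by (simp add: power2_eq_1_iff)
  ultimately consider "c = 1" "?G (of_real u1) = 0" "?G (- of_real u0) = 0"
    | "c = - 1" "?G (- of_real u1) = 0" "?G (of_real u0) = 0"
    by fastforce
  then show ?thesis
  proof cases
    case 1
    then have "u1 = v1 \<or> v1 * u1 = 1" and "u0 = v0 \<or> v0 * u0 = 1"
      using quartic_positive_root[of v0 v1 u1] quartic_negative_root[of v0 v1 u0] u u1 v v1 by auto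
    moreover have "v1 * u1 > 1"
      using less_1_mult[OF v1 u1] .
    ultimately show ?thesis
      using \<open>c = 1\<close> by auto
  next
    case 2
    then have "u1 = v0 \<or> v0 * u1 = 1" and "u0 = v1 \<or> v1 * u0 = 1"
      using quartic_positive_root[of v0 v1 u0] quartic_negative_root[of v0 v1 u1] u u1 v v1 by auto
    then have False
      by (rule quartic_roots_swapped_impossible[OF u v])
    then show ?thesis ..
  qed
qed

lemma of_real_plus_one_neq_0: "0 < x \<Longrightarrow> complex_of_real x + 1 \<noteq> 0"
  by (metis add_pos_pos less_irrefl of_real_1 of_real_add of_real_eq_0_iff zero_less_one)

lemma quadratic_values_equal_params:
  fixes v1 v0 :: real and c' \<sigma> :: complex
  assumes pos: "0 < v0" "1 < v1"
    and R1: "c' * of_real ((v1 - 1) * (v0 + 1)) = of_real ((v1 - 1) * (v0 + 1))"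
    and R2: "c' * \<sigma> * of_real ((v0 - 1) * (v1 + 1)) = of_real ((v0 - 1) * (v1 + 1))"
  shows "c' = 1" and "\<sigma> = - 1 \<Longrightarrow> v0 = 1"
proof -
  have "(c' - 1) * of_real ((v1 - 1) * (v0 + 1)) = 0"
    using R1 by (simp only: left_diff_distrib mult_1) simp
  then show c': "c' = 1"
    using pos of_real_plus_one_neq_0[of v0] by simp
  assume "\<sigma> = - 1"
  with R2 c' have "complex_of_real (- ((v0 - 1) * (v1 + 1))) = of_real ((v0 - 1) * (v1 + 1))"
    by (simp only: of_real_minus mult_1 mult_minus1)
  then have "- ((v0 - 1) * (v1 + 1)) = (v0 - 1) * (v1 + 1)"
    by (simp only: of_real_eq_iff)
  then show "v0 = 1"
    using pos by simp
qed

lemma quadratic_values_swapped_params: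
  fixes v1 v0 :: real and c' \<sigma> :: complex
  assumes pos: "0 < v0" "1 < v1"
    and R1: "c' * of_real ((v1 - 1) * (v0 + 1)) = of_real ((v1 - 1) * (1 / v0 + 1))"
    and R2: "c' * \<sigma> * of_real ((v0 - 1) * (v1 + 1)) = of_real ((1 / v0 - 1) * (v1 + 1))"
  shows "c' = of_real (1 / v0)" and "\<sigma> = 1 \<Longrightarrow> v0 = 1"
proof -
  have "(v1 - 1) * (1 / v0 + 1) = 1 / v0 * ((v1 - 1) * (v0 + 1))"
    using pos by (simp add: field_simps)
  with R1 have "(c' - of_real (1 / v0)) * of_real ((v1 - 1) * (v0 + 1)) = 0"
    by (simp only: left_diff_distrib of_real_mult) simp
  then show c': "c' = of_real (1 / v0)"
    using pos of_real_plus_one_neq_0[of v0] by simp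
  assume "\<sigma> = 1"
  with R2 c' have "complex_of_real (1 / v0 * ((v0 - 1) * (v1 + 1))) = of_real ((1 / v0 - 1) * (v1 + 1))"
    by (simp only: mult_1_right of_real_mult)
  then have "1 / v0 * ((v0 - 1) * (v1 + 1)) = (1 / v0 - 1) * (v1 + 1)"
    by (simp only: of_real_eq_iff)
  then have "(v0 - 1) * (v1 + 1) = (1 - v0) * (v1 + 1)"
    using pos by (simp add: field_simps)
  then show "v0 = 1"
    using pos by simp
qed

lemma parameters_from_quadratic_values:
  fixes u0 v1 v0 :: real and c' \<sigma> :: complex
  assumes pos: "0 < v0" "1 < v1" and alt: "u0 = v0 \<or> v0 * u0 = 1" and \<sigma>: "\<sigma> = 1 \<or> \<sigma> = - 1"
    and R1: "c' * of_real ((v1 - 1) * (v0 + 1)) = of_real ((v1 - 1) * (u0 + 1))"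
    and R2: "c' * \<sigma> * of_real ((v0 - 1) * (v1 + 1)) = of_real ((u0 - 1) * (v1 + 1))"
  shows "(\<sigma> = 1 \<longrightarrow> c' = 1 \<and> u0 = v0) \<and> (\<sigma> = - 1 \<longrightarrow> c' = of_real (1 / v0) \<and> v0 * u0 = 1)"
  using alt
proof
  assume u0: "u0 = v0"
  note equal = quadratic_values_equal_params[OF pos R1[unfolded u0] R2[unfolded u0]]
  show ?thesis
  proof (intro conjI impI)
    show "c' = 1" "u0 = v0"
      using equal(1) u0 by simp_all
    assume "\<sigma> = - 1"
    then have "v0 = 1"
      by (rule equal(2))
    then show "c' = of_real (1 / v0)" "v0 * u0 = 1"
      using equal(1) u0 by simp_all
  qed
next
  assume "v0 * u0 = 1"
  then have u0: "u0 = 1 / v0"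
    using pos by (simp add: field_simps)
  note swapped = quadratic_values_swapped_params[OF pos R1[unfolded u0] R2[unfolded u0]]
  show ?thesis
  proof (intro conjI impI)
    show "c' = of_real (1 / v0)" "v0 * u0 = 1"
      using swapped(1) \<open>v0 * u0 = 1\<close> by simp_all
    assume "\<sigma> = 1"
    then have "v0 = 1"
      by (rule swapped(2))
    then show "c' = 1" "u0 = v0"
      using swapped(1) u0 by simp_all
  qed
qed

section \<open>Homomorphisms between rank one affine Hecke algebras\<close>

locale rank_one_hecke_hom =
  fixes al alv :: "int ^ 'n::finite" and al' alv' :: "int ^ 'm::finite"
    and q1 q0 q1' q0' :: real and I :: "'n hecke \<Rightarrow> 'm hecke"
    and c c' :: complex and k :: int and n :: nat and b' :: "'m grpalg"
  assumes rd: "root_datum al alv" and rd': "root_datum al' alv'"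
    and q1: "q1 > 1" and q0: "q0 > 1" and q1': "q1' > 1" and q0': "q0' > 1"
    and eq': "\<not> in2X al' \<longrightarrow> q1' = q0'"
    and hom: "hecke_alg_hom al alv q1 q0 al' alv' q1' q0' I"
    and c': "c' \<noteq> 0" and n: "n > 0"
    and I_Tgen: "I Tgen = hadd (hmult al' alv' q1' q0' (emb (cst c' * theta (k *s alv'))) Tgen) (emb b')"
    and I_theta: "I (emb (theta alv)) = emb (cst c * theta (int n *s alv'))"
begin

abbreviation "hmult' \<equiv> hmult al' alv' q1' q0'"
abbreviation "Q' \<equiv> Qop al' alv' q1' q0'"
abbreviation "ev z \<equiv> lin_ext (chi al' z)"
abbreviation "x \<equiv> cst c * theta (int n *s alv')"
abbreviation "t \<equiv> cst c' * theta (k *s alv')"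

definition "u1 = sqrt q1 * sqrt q0"
definition "u0 = sqrt q1 / sqrt q0"
definition "v1 = sqrt q1' * sqrt q0'"
definition "v0 = sqrt q1' / sqrt q0'"

abbreviation "\<rho> \<equiv> rho (complex_of_real u1 * of_real u0 - 1) (of_real u1 - of_real u0)"
abbreviation "\<rho>' \<equiv> rho (complex_of_real v1 * of_real v0 - 1) (of_real v1 - of_real v0)"

text \<open>The parameters enter the definitions of \<open>u1, \<dots>, v0\<close>, so these equations must be used
  from right to left.\<close>
lemma u1_mult_u0: "u1 * u0 = q1" and u1_div_u0: "u1 / u0 = q0"
  and v1_mult_v0: "v1 * v0 = q1'" and v1_div_v0: "v1 / v0 = q0'"
  using q1 q0 q1' q0' by (simp_all add: u1_def u0_def v1_def v0_def)

lemma u_bounds: "0 < u0" "u0 < u1" "1 < u1 * u0"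
  and v_bounds: "0 < v0" "v0 < v1" "1 < v1 * v0"
  using q1 q0 q1' q0' by (auto simp: u1_def u0_def v1_def v0_def field_simps)

lemma hom_hadd: "I (hadd a b) = hadd (I a) (I b)"
  and hom_hscale: "I (hscale s a) = hscale s (I a)"
  and hom_hmult: "I (hmult al alv q1 q0 a b) = hmult' (I a) (I b)"
  and hom_hone: "I hone = hone"
  using hom unfolding hecke_alg_hom_def by blast+

lemma I_Tgen_pair: "I Tgen = (b', t)"
  using I_Tgen by (simp add: Tgen_def emb_def hadd_def hmult_pair)

lemma image_theta_T_theta:
  "hmult' (hmult' (emb x) (b', t)) (emb x) = hadd (b', t)
    (emb (cst (complex_of_real (q1 - 1)) * x * x + cst (complex_of_real (u1 - u0)) * x))"
proof -
  have "I (hmult al alv q1 q0 (hmult al alv q1 q0 (emb (theta alv)) Tgen) (emb (theta alv))) =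
      hmult' (hmult' (emb x) (b', t)) (emb x)"
    by (simp only: hom_hmult I_theta I_Tgen_pair)
  moreover have "I (hmult al alv q1 q0 (hmult al alv q1 q0 (emb (theta alv)) Tgen) (emb (theta alv))) =
      hadd (b', t) (hadd (hscale (complex_of_real (q1 - 1)) (hmult' (emb x) (emb x)))
        (hscale (complex_of_real (u1 - u0)) (emb x)))"
    by (simp only: theta_T_theta[OF rd] hom_hadd hom_hscale hom_hmult I_theta I_Tgen_pair u1_def u0_def)
  ultimately show ?thesis
    by (simp add: hadd_emb_combination)
qed

lemma image_T_square:
  "hmult' (b', t) (b', t) = hadd (hscale (complex_of_real (q1 - 1)) (b', t)) (hscale (complex_of_real q1) hone)"
  using arg_cong[OF T_square[OF rd, of q1 q0], of I]
  by (simp only: hom_hadd hom_hscale hom_hmult hom_hone I_Tgen_pair)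

lemma image_relations:
  "x * b' * x + x * t * Q' x = b' + (cst (complex_of_real (q1 - 1)) * x * x + cst (complex_of_real (u1 - u0)) * x)"
  "x * t * sact al' alv' x = t"
  "b' * b' + t * Q' b' + cst (complex_of_real q1') * t * sact al' alv' t =
    cst (complex_of_real (q1 - 1)) * b' + cst (complex_of_real q1)"
  using arg_cong[OF image_theta_T_theta, of fst] arg_cong[OF image_theta_T_theta, of snd]
    arg_cong[OF image_T_square, of fst]
  by (simp_all add: hmult_pair hadd_def hscale_def emb_def hone_def mult.assoc)

lemma ev_cst_theta: "z \<noteq> 0 \<Longrightarrow> ev z (cst a * theta (j *s alv')) = a * (z\<^sup>2) powi j"
  by (simp add: lin_ext_chi_mult chi_coroot[OF rd'])

lemma c_squared: "c\<^sup>2 = 1"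
proof -
  have "c * c' * c = c'"
    using arg_cong[OF image_relations(2), of "ev 1"]
    by (simp add: lin_ext_chi_mult lin_ext_chi_sact[OF rd'] ev_cst_theta)
  then show ?thesis
    using c' by (simp add: power2_eq_square mult.commute mult.left_commute)
qed

lemma ev_x: "z \<noteq> 0 \<Longrightarrow> ev z x = c * (z\<^sup>2) ^ n"
  by (simp add: ev_cst_theta power_int_of_nat)

lemma ev_t: "z \<noteq> 0 \<Longrightarrow> ev z t = c' * (z\<^sup>2) powi k"
  by (simp add: ev_cst_theta)

lemma ev_Q':
  assumes "z \<noteq> 0" "(z\<^sup>2)\<^sup>2 \<noteq> 1"
  shows "ev z (Q' f) = \<rho>' (z\<^sup>2) * (ev z f - ev (inverse z) f)"
proof (rule rho_eqI)
  show "ev z (Q' f) * (1 - inverse (z\<^sup>2) ^ 2) =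
      (of_real v1 * of_real v0 - 1 + inverse (z\<^sup>2) * (of_real v1 - of_real v0)) * (ev z f - ev (inverse z) f)"
  proof -
    have a: "complex_of_real (q1' - 1) = of_real v1 * of_real v0 - 1"
      by (simp add: v1_mult_v0 flip: of_real_mult)
    have d: "complex_of_real (sqrt q1' * sqrt q0' - sqrt q1' / sqrt q0') = of_real v1 - of_real v0"
      by (simp add: v1_def v0_def)
    have "0 < q1'"
      using q1' by simp
    from lin_ext_chi_Qop[OF rd' eq' this assms(1), of f] show ?thesis
      unfolding a d .
  qed
qed (use assms in auto)

lemma ev_b'_from_theta_relation:
  assumes z: "z \<noteq> 0" and X: "(z\<^sup>2) ^ (2 * n) \<noteq> 1"
  shows "ev z b' = \<rho> (c * (z\<^sup>2) ^ n) - c' * (z\<^sup>2) powi k * \<rho>' (z\<^sup>2)"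
proof (rule rho_solve)
  let ?X = "z\<^sup>2" and ?Y = "c * (z\<^sup>2) ^ n"
  have cc: "c * c = 1"
    using c_squared by (simp add: power2_eq_square)
  have "?Y\<^sup>2 = c\<^sup>2 * (?X ^ n)\<^sup>2"
    by (simp add: power_mult_distrib)
  also have "\<dots> = ?X ^ (2 * n)"
    by (simp add: c_squared mult.commute[of 2 n] flip: power_mult)
  finally have Y2: "?Y\<^sup>2 = ?X ^ (2 * n)" .
  then show "?Y\<^sup>2 \<noteq> 1"
    using X by simp
  have "(?X\<^sup>2) ^ n \<noteq> 1"
    using X by (simp add: power_mult)
  then have "?X\<^sup>2 \<noteq> 1"
    by auto
  then have "ev z (Q' x) = \<rho>' ?X * (c * ?X ^ n - c * inverse ?X ^ n)"
    using z by (simp add: ev_Q' ev_x power_inverse)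
  moreover have "?X ^ n * inverse ?X ^ n = 1"
    using z by (simp flip: power_mult_distrib)
  moreover have "?X ^ n * ?X ^ n = ?X ^ (2 * n)"
    by (simp add: mult_2 flip: power_add)
  moreover have "?Y * (\<rho>' ?X * (c * ?X ^ n - c * inverse ?X ^ n)) =
      \<rho>' ?X * ((c * c) * (?X ^ n * ?X ^ n) - (c * c) * (?X ^ n * inverse ?X ^ n))"
    by (simp add: algebra_simps)
  ultimately show "?Y * ev z (Q' x) = \<rho>' ?X * (?Y\<^sup>2 - 1)"
    using cc unfolding Y2 by simp
  show "?Y * ev z b' * ?Y + ?Y * (c' * ?X powi k) * ev z (Q' x) =
      ev z b' + ((of_real u1 * of_real u0 - 1) * ?Y * ?Y + (of_real u1 - of_real u0) * ?Y)"
    using arg_cong[OF image_relations(1), of "ev z"] z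
    by (simp add: lin_ext_chi_mult lin_ext_add chi_coroot[OF rd'] power_int_of_nat u1_mult_u0
        flip: of_real_mult)
qed

lemma ev_quadratic_relation:
  assumes z: "z \<noteq> 0" and X: "(z\<^sup>2)\<^sup>2 \<noteq> 1"
  shows "ev z b' * ev z b' + c' * (z\<^sup>2) powi k * (\<rho>' (z\<^sup>2) * (ev z b' - ev (inverse z) b'))
      + (of_real v1 * of_real v0) * c'\<^sup>2 = (of_real u1 * of_real u0 - 1) * ev z b' + of_real u1 * of_real u0"
proof -
  have "(z\<^sup>2) powi k * inverse (z\<^sup>2) powi k = 1"
    using z by (simp add: power_int_inverse flip: power_int_mult_distrib)
  then have "ev z t * ev z (sact al' alv' t) = c'\<^sup>2"
    using z by (simp add: lin_ext_chi_sact[OF rd'] ev_t power_inverse power2_eq_square mult_ac)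
  then show ?thesis
    using arg_cong[OF image_relations(3), of "ev z"] z X
    by (simp add: lin_ext_chi_mult lin_ext_add ev_Q' chi_coroot[OF rd'] u1_mult_u0 v1_mult_v0 mult.assoc
        flip: of_real_mult)
qed

lemma quartic_identity_at:
  assumes z: "z \<noteq> 0" and X: "(z\<^sup>2) ^ (2 * n) \<noteq> 1"
  shows "c'\<^sup>2 * poly (quartic v1 v0) (z\<^sup>2) * ((z\<^sup>2) ^ (2 * n) - 1)\<^sup>2 =
    poly (quartic u1 u0) (c * (z\<^sup>2) ^ n) * ((z\<^sup>2)\<^sup>2 - 1)\<^sup>2"
proof -
  define X Y where "X = z\<^sup>2" and "Y = c * X ^ n"
  have cc: "c * c = 1"
    using c_squared by (simp add: power2_eq_square)
  have X0: "X \<noteq> 0" and Y0: "Y \<noteq> 0"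
    using z cc by (auto simp: X_def Y_def)
  have Y2: "Y\<^sup>2 = X ^ (2 * n)"
    using c_squared by (simp add: Y_def power_mult_distrib mult.commute[of 2 n] flip: power_mult)
  have "(X\<^sup>2) ^ n \<noteq> 1"
    using X by (simp add: X_def power_mult)
  then have X2: "X\<^sup>2 \<noteq> 1"
    by auto
  have Y2': "Y\<^sup>2 \<noteq> 1" and iX: "((inverse z)\<^sup>2) ^ (2 * n) \<noteq> 1"
    using X by (simp_all add: Y2 X_def power_inverse)
  have "inverse c = c"
    using cc by (rule inverse_unique)
  then have "inverse Y = c * inverse X ^ n"
    by (simp add: Y_def power_inverse)
  then have B': "ev (inverse z) b' = \<rho> (inverse Y) - c' * inverse X powi k * \<rho>' (inverse X)"
    using ev_b'_from_theta_relation[of "inverse z"] z iX by (simp add: X_def power_inverse power_int_inverse)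
  have B: "ev z b' = \<rho> Y - c' * X powi k * \<rho>' X"
    using ev_b'_from_theta_relation[OF z X] by (simp add: X_def Y_def)
  have "c'\<^sup>2 * ((of_real v1 * of_real v0 - \<rho>' X) * (1 + \<rho>' X)) =
      (of_real u1 * of_real u0 - \<rho> Y) * (1 + \<rho> Y)"
  proof (rule quadratic_relation_eliminated[OF B B'])
    show "\<rho> Y + \<rho> (inverse Y) = of_real u1 * of_real u0 - 1"
      by (rule rho_add_rho_inverse[OF Y0 Y2'])
    show "\<rho>' X + \<rho>' (inverse X) = of_real v1 * of_real v0 - 1"
      by (rule rho_add_rho_inverse[OF X0 X2])
    show "c' * X powi k * (c' * inverse X powi k) = c'\<^sup>2"
      using X0 by (simp add: power2_eq_square power_int_inverse mult_ac flip: power_int_mult_distrib)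
    show "ev z b' * ev z b' + c' * X powi k * (\<rho>' X * (ev z b' - ev (inverse z) b')) +
        of_real v1 * of_real v0 * c'\<^sup>2 = (of_real u1 * of_real u0 - 1) * ev z b' + of_real u1 * of_real u0"
      using ev_quadratic_relation[OF z] X2 by (simp add: X_def mult.assoc)
  qed
  then have "c'\<^sup>2 * (poly (quartic v1 v0) X / (X\<^sup>2 - 1)\<^sup>2) = poly (quartic u1 u0) Y / (Y\<^sup>2 - 1)\<^sup>2"
    by (simp add: rho_quadratic[OF X2] rho_quadratic[OF Y2'])
  then show ?thesis
    using X2 Y2' by (simp add: field_simps Y2 flip: X_def Y_def)
qed

lemma quartic_poly_identity:
  "smult (c'\<^sup>2) (quartic v1 v0 * (monom 1 (2 * n) - 1)\<^sup>2) =
    pcompose (quartic u1 u0) (monom c n) * (monom 1 2 - 1)\<^sup>2"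
proof (rule poly_eqI_on_reals_gt_1)
  fix r :: real
  assume r: "r > 1"
  define z where "z = complex_of_real (sqrt r)"
  have "z\<^sup>2 = of_real r" "z \<noteq> 0"
    using r by (simp_all add: z_def flip: of_real_power)
  moreover have "(of_real r :: complex) ^ (2 * n) \<noteq> 1"
    using one_less_of_real_power[OF r] n by simp
  ultimately show "poly (smult (c'\<^sup>2) (quartic v1 v0 * (monom 1 (2 * n) - 1)\<^sup>2)) (of_real r) =
      poly (pcompose (quartic u1 u0) (monom c n) * (monom 1 2 - 1)\<^sup>2) (of_real r)"
    using quartic_identity_at[of z] by (simp add: poly_pcompose poly_monom mult.assoc)
qed

lemma n_eq_1: "n = 1"
proof (rule quartic_identity_degree_one[OF u_bounds v_bounds c_squared c' n])
  fix X
  show "c'\<^sup>2 * poly (quartic v1 v0) X * (X ^ (2 * n) - 1)\<^sup>2 = poly (quartic u1 u0) (c * X ^ n) * (X\<^sup>2 - 1)\<^sup>2"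
    using arg_cong[OF quartic_poly_identity, of "\<lambda>p. poly p X"]
    by (simp only: poly_smult poly_mult poly_pcompose poly_monom poly_power poly_diff poly_1 mult.assoc
        mult_1_left)
qed

lemma c_eq_1_and_u_eq_v: "c = 1 \<and> u1 = v1 \<and> (u0 = v0 \<or> v0 * u0 = 1)"
proof (rule quartic_identity_parameters[OF u_bounds v_bounds c_squared c'])
  have "poly (monom (1::complex) 2 - 1) 0 = - 1"
    by (simp add: poly_monom)
  then have "monom (1::complex) 2 - 1 \<noteq> 0"
    by (intro notI) simp
  then have identity: "smult (c'\<^sup>2) (quartic v1 v0) = pcompose (quartic u1 u0) (monom c 1)"
    using quartic_poly_identity by (simp add: n_eq_1 flip: mult_smult_left)
  show "c'\<^sup>2 * poly (quartic v1 v0) X = poly (quartic u1 u0) (c * X)" for X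
    using arg_cong[OF identity, of "\<lambda>p. poly p X"]
    by (simp only: poly_smult poly_pcompose poly_monom power_one_right)
qed

lemma c_eq_1: "c = 1"
  using c_eq_1_and_u_eq_v by simp

lemma I_theta_eq: "I (emb (theta alv)) = emb (theta alv')"
  using I_theta c_eq_1_and_u_eq_v n_eq_1 by simp

lemma ev_relation_at_sign:
  assumes z: "z \<noteq> 0" and w: "(z\<^sup>2)\<^sup>2 = 1"
  shows "c' * (z\<^sup>2) powi k * (of_real (v1 * v0 - 1) + of_real (v1 - v0) * z\<^sup>2) =
    of_real (u1 * u0 - 1) + of_real (u1 - u0) * z\<^sup>2"
proof -
  define w where "w = z\<^sup>2"
  have ww: "w * w = 1"
    using w by (simp add: w_def power2_eq_square)
  have "w * y * w = y * (w * w)" "y * w * w = y * (w * w)" for y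
    by (simp_all add: mult_ac)
  then have ww': "w * y * w = y" "y * w * w = y" for y
    by (simp_all add: ww)
  have "Q' (theta alv') = cst (of_real (v1 * v0 - 1)) * theta alv' + cst (of_real (v1 - v0))"
    by (simp add: Qop_theta_coroot[OF rd'] v1_mult_v0 flip: v1_def v0_def)
  then have "w * ev z b' * w + w * (c' * w powi k) * (of_real (v1 * v0 - 1) * w + of_real (v1 - v0)) =
      ev z b' + (of_real (u1 * u0 - 1) * w * w + of_real (u1 - u0) * w)"
    using arg_cong[OF image_relations(1), of "ev z"] c_eq_1 n_eq_1 z chi_coroot[OF rd', of z 1]
    by (simp add: lin_ext_chi_mult lin_ext_add chi_coroot[OF rd'] u1_mult_u0 w_def del: of_real_diff)
  then have E: "w * (c' * w powi k) * (of_real (v1 * v0 - 1) * w + of_real (v1 - v0)) =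
      of_real (u1 * u0 - 1) + of_real (u1 - u0) * w"
    unfolding ww' by simp
  have "c' * w powi k * (of_real (v1 * v0 - 1) + of_real (v1 - v0) * w) =
      c' * w powi k * (w * (of_real (v1 * v0 - 1) * w + of_real (v1 - v0)))"
    by (simp add: algebra_simps ww)
  also have "\<dots> = w * (c' * w powi k) * (of_real (v1 * v0 - 1) * w + of_real (v1 - v0))"
    by (simp only: mult_ac)
  also have "\<dots> = of_real (u1 * u0 - 1) + of_real (u1 - u0) * w"
    by (rule E)
  finally show ?thesis
    by (simp only: w_def)
qed

lemma parameters: "(even k \<longrightarrow> c' = 1 \<and> u0 = v0) \<and> (odd k \<longrightarrow> c' = of_real (1 / v0) \<and> v0 * u0 = 1)"
proof -
  have u1: "u1 = v1" and alt: "u0 = v0 \<or> v0 * u0 = 1"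
    using c_eq_1_and_u_eq_v by auto
  have "c' * (of_real (v1 * v0 - 1) + of_real (v1 - v0)) = of_real (u1 * u0 - 1) + of_real (u1 - u0)"
    using ev_relation_at_sign[of 1] by simp
  moreover have "of_real ((v1 - 1) * (v0 + 1)) = (of_real (v1 * v0 - 1) + of_real (v1 - v0) :: complex)"
    and "of_real ((v1 - 1) * (u0 + 1)) = (of_real (u1 * u0 - 1) + of_real (u1 - u0) :: complex)"
    by (simp_all add: u1 algebra_simps)
  ultimately have R1: "c' * of_real ((v1 - 1) * (v0 + 1)) = of_real ((v1 - 1) * (u0 + 1))"
    by simp
  have "\<i>\<^sup>2 = (- 1 :: complex)"
    by simp
  then have "c' * (- 1) powi k * (of_real (v1 * v0 - 1) - of_real (v1 - v0)) =
      of_real (u1 * u0 - 1) - of_real (u1 - u0)"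
    using ev_relation_at_sign[of \<i>] by (simp add: algebra_simps)
  moreover have "of_real ((v0 - 1) * (v1 + 1)) = (of_real (v1 * v0 - 1) - of_real (v1 - v0) :: complex)"
    and "of_real ((u0 - 1) * (v1 + 1)) = (of_real (u1 * u0 - 1) - of_real (u1 - u0) :: complex)"
    by (simp_all add: u1 algebra_simps)
  ultimately have R2: "c' * (- 1) powi k * of_real ((v0 - 1) * (v1 + 1)) = of_real ((u0 - 1) * (v1 + 1))"
    by simp
  have "0 < v0" "1 < v1"
    using v_bounds one_less_larger_factor by blast+
  moreover have "(- 1 :: complex) powi k = 1 \<longleftrightarrow> even k" "(- 1 :: complex) powi k = - 1 \<longleftrightarrow> odd k"
    by (simp_all add: power_int_minus_left)
  ultimately show ?thesis
    using parameters_from_quadratic_values[OF _ _ alt _ R1 R2] by auto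
qed

lemma I_Tgen_theta_relation:
  "hmult' (hmult' (emb (theta alv')) (I Tgen)) (emb (theta alv')) = hadd (I Tgen)
    (emb (cst (complex_of_real (q1 - 1)) * theta alv' * theta alv'
      + cst (complex_of_real (sqrt q1 * sqrt q0 - sqrt q1 / sqrt q0)) * theta alv'))"
  using image_theta_T_theta c_eq_1 n_eq_1 by (simp add: I_Tgen_pair u1_def u0_def)

lemma snd_conjugate_coroot:
  "snd (hmult' (hmult' (emb (theta (j *s alv'))) a) (emb (theta (- (j *s alv'))))) =
    snd a * theta ((2 * j) *s alv')"
proof -
  have "sref al' alv' (- (j *s alv')) = j *s alv'"
    using sref_smult_coroot[OF rd', of "- j"] by (simp add: vector_smult_lneg)
  moreover have "(2 * j) *s alv' = j *s alv' + j *s alv'"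
    by (metis mult_2 vector_sadd_rdistrib)
  then have "theta ((2 * j) *s alv') = theta (j *s alv') * theta (j *s alv')"
    by (simp only: theta_add)
  ultimately show ?thesis
    by (cases a) (simp add: hmult_pair emb_def sact_theta mult_ac)
qed

lemma I_Tgen_eq_conjugate:
  assumes A: "hmult' (hmult' (emb (theta alv')) A) (emb (theta alv')) = hadd A
    (emb (cst (complex_of_real (q1 - 1)) * theta alv' * theta alv'
      + cst (complex_of_real (sqrt q1 * sqrt q0 - sqrt q1 / sqrt q0)) * theta alv'))"
    and snd: "snd A * theta ((2 * j) *s alv') = t"
  shows "I Tgen = hmult' (hmult' (emb (theta (j *s alv'))) A) (emb (theta (- (j *s alv'))))"
proof (rule theta_conj_eq_unique[OF rd' I_Tgen_theta_relation])
  show "hmult' (hmult' (emb (theta alv')) (hmult' (hmult' (emb (theta (j *s alv'))) A) (emb (theta (- (j *s alv'))))))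
      (emb (theta alv')) = hadd (hmult' (hmult' (emb (theta (j *s alv'))) A) (emb (theta (- (j *s alv')))))
      (emb (cst (complex_of_real (q1 - 1)) * theta alv' * theta alv'
        + cst (complex_of_real (sqrt q1 * sqrt q0 - sqrt q1 / sqrt q0)) * theta alv'))"
    using q1' by (intro theta_conj_eq_conjugate[OF rd' eq' _ A]) simp
  show "snd (I Tgen) = snd (hmult' (hmult' (emb (theta (j *s alv'))) A) (emb (theta (- (j *s alv')))))"
    by (simp add: I_Tgen_pair snd_conjugate_coroot snd)
qed

lemma even_parameters:
  assumes "even k"
  shows "c' = 1" and "q1 = q1'" and "q0 = q0'"
proof -
  show "c' = 1"
    using parameters assms by simp
  have "u0 = v0" "u1 = v1"
    using parameters c_eq_1_and_u_eq_v assms by auto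
  then show "q1 = q1'" "q0 = q0'"
    by (metis u1_mult_u0 v1_mult_v0, metis u1_div_u0 v1_div_v0)
qed

lemma odd_parameters:
  assumes "odd k"
  shows "c' = complex_of_real (sqrt q0' / sqrt q1')" and "q1 = q0'" and "q0 = q1'"
proof -
  have c': "c' = of_real (1 / v0)" and "v0 * u0 = 1" "u1 = v1"
    using parameters c_eq_1_and_u_eq_v assms by auto
  then show "c' = complex_of_real (sqrt q0' / sqrt q1')"
    by (simp add: v0_def)
  have "u0 = 1 / v0"
    using \<open>v0 * u0 = 1\<close> v_bounds by (simp add: field_simps)
  then show "q1 = q0'" "q0 = q1'"
    using \<open>u1 = v1\<close> by (metis u1_mult_u0 v1_div_v0 divide_inverse inverse_eq_divide,
        metis u1_div_u0 v1_mult_v0 divide_divide_eq_right div_by_1)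
qed

lemma I_Tgen_even:
  assumes "even k"
  shows "I Tgen = hmult' (hmult' (emb (theta ((k div 2) *s alv'))) Tgen) (emb (theta ((- (k div 2)) *s alv')))"
proof -
  have "hmult' (hmult' (emb (theta alv')) Tgen) (emb (theta alv')) = hadd Tgen
      (emb (cst (complex_of_real (q1 - 1)) * theta alv' * theta alv'
        + cst (complex_of_real (sqrt q1 * sqrt q0 - sqrt q1 / sqrt q0)) * theta alv'))"
    using theta_T_theta[OF rd', of q1' q0'] even_parameters[OF assms] by (simp add: hadd_emb_combination)
  moreover have "snd Tgen * theta ((2 * (k div 2)) *s alv') = t"
    using assms even_parameters(1)[OF assms] by (simp add: Tgen_def)
  ultimately show ?thesis
    by (simp add: I_Tgen_eq_conjugate vector_smult_lneg)
qed

lemma I_Tgen_odd: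
  assumes "odd k"
  defines "T0 \<equiv> hscale (complex_of_real (sqrt q0' / sqrt q1'))
    (hadd (hmult' (emb (theta alv')) Tgen) (hscale (- complex_of_real (q1' - 1)) (emb (theta alv'))))"
  shows "I Tgen = hmult' (hmult' (emb (theta (((k - 1) div 2) *s alv'))) T0)
      (emb (theta ((- ((k - 1) div 2)) *s alv')))"
proof -
  have "hmult' (hmult' (emb (theta alv')) T0) (emb (theta alv')) = hadd T0
      (emb (cst (complex_of_real (q1 - 1)) * theta alv' * theta alv'
        + cst (complex_of_real (sqrt q1 * sqrt q0 - sqrt q1 / sqrt q0)) * theta alv'))"
    unfolding T0_def odd_parameters(2,3)[OF assms(1)] using q1' q0' by (intro theta_T0_theta[OF rd']) simp_all
  moreover have "snd T0 = cst c' * theta alv'"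
    unfolding T0_def odd_parameters(1)[OF assms(1), symmetric]
    by (simp add: hscale_def hadd_def emb_def Tgen_def hmult_pair)
  moreover have "theta alv' * theta ((2 * ((k - 1) div 2)) *s alv') = theta (k *s alv')"
  proof -
    obtain m where "k = 2 * m + 1"
      using assms(1) by (rule oddE)
    then show ?thesis
      by (simp add: vector_sadd_rdistrib flip: theta_add) (simp add: add.commute)
  qed
  ultimately show ?thesis
    by (simp add: I_Tgen_eq_conjugate vector_smult_lneg mult.assoc)
qed

end

theorem propositionD1:
  fixes al alv :: "int ^ 'n::finite" and al' alv' :: "int ^ 'm::finite"
    and qq lam lams lam' lams' :: real
    and q1 q0 q1' q0' :: real
    and I :: "'n hecke \<Rightarrow> 'm hecke"
    and c c' :: complex and k :: int and n :: nat and b' :: "'m grpalg"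
  assumes "root_datum al alv" and "root_datum al' alv'"
    and "qq > 1" and "lam > 0" and "lams > 0" and "lam' > 0" and "lams' > 0"
    and "\<not> in2X al \<Longrightarrow> lam = lams" and "\<not> in2X al' \<Longrightarrow> lam' = lams'"
    and "q1 = qq powr lam" and "q0 = qq powr lams"
    and "q1' = qq powr lam'" and "q0' = qq powr lams'"
    and "hecke_alg_hom al alv q1 q0 al' alv' q1' q0' I"
    and "c' \<noteq> 0"
    and "I Tgen = hadd (hmult al' alv' q1' q0' (emb (cst c' * theta (k *s alv'))) Tgen) (emb b')"
    and "c \<noteq> 0" and "n > 0"
    and "I (emb (theta alv)) = emb (cst c * theta (int n *s alv'))"
  shows "(even k \<longrightarrow>
           I Tgen = hmult al' alv' q1' q0'
                      (hmult al' alv' q1' q0' (emb (theta ((k div 2) *s alv'))) Tgen)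
                      (emb (theta ((- (k div 2)) *s alv')))
           \<and> I (emb (theta alv)) = emb (theta alv')
           \<and> q1 = q1' \<and> q0 = q0')
       \<and> (odd k \<longrightarrow>
           (let Ts0 = hscale (complex_of_real (sqrt q0' / sqrt q1'))
                        (hadd (hmult al' alv' q1' q0' (emb (theta alv')) Tgen)
                              (hscale (- complex_of_real (q1' - 1)) (emb (theta alv'))))
            in I Tgen = hmult al' alv' q1' q0'
                      (hmult al' alv' q1' q0' (emb (theta (((k - 1) div 2) *s alv'))) Ts0)
                      (emb (theta ((- ((k - 1) div 2)) *s alv'))))
           \<and> I (emb (theta alv)) = emb (theta alv')
           \<and> q1 = q0' \<and> q0 = q1')"
proof -
  have gt1: "1 < qq powr a" if "0 < a" for a
    using assms(3) that by (rule gr_one_powr)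
  interpret rank_one_hecke_hom al alv al' alv' q1 q0 q1' q0' I c c' k n b'
    using assms gt1 by unfold_locales auto
  show ?thesis
    using I_Tgen_even I_Tgen_odd I_theta_eq even_parameters(2,3) odd_parameters(2,3)
    by (simp add: Let_def)
qed

end
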